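(* Let $(X,\mathscr{A},\mu)$ be a $\sigma$-finite measure space, $\phi$ a nonsingular transformation of $X$ with $\mathsf{h}_\phi<\infty$ a.e. $[\mu]$, and $P\colon X\times\mathfrak{B}(\mathbb{R}_+)\to[0,1]$ an $\mathscr{A}$-measurable family of probability measures satisfying the strong consistency condition (SCC): $P(x,\sigma)=\dfrac{\int_\sigma t\,P(\phi(x),\mathrm{d}t)}{\mathsf{h}_\phi(\phi(x))}$ for $\mu$-a.e. $x\in X$, for every $\sigma\in\mathfrak{B}(\mathbb{R}_+)$. Then $P(x,\{0\})=0$ for $\mu$-a.e. $x\in X$, and for every Borel function $f\colon\mathbb{R}_+\to[0,\infty]$ and every $n\in\mathbb{N}$, $$\int_0^\infty f(t)P(x,\mathrm{d}t)=\frac{\int_0^\infty f(t)t^nP(\phi^n(x),\mathrm{d}t)}{\prod_{j=1}^n\mathsf{h}_\phi(\phi^j(x))}\quad\text{for }\mu\text{-a.e. }x\in X.$$ In particular, for all $n\in\mathbb{N}$ and $m\in\mathbb{Z}$: (i) $\int_\sigma t^mP(x,\mathrm{d}t)=\frac{\int_\sigma t^{m+n}P(\phi^n(x),\mathrm{d}t)}{\prod_{j=1}^n\mathsf{h}_\phi(\phi^j(x))}$ for $\mu$-a.e. $x$ and every $\sigma\in\mathfrak{B}(\mathbb{R}_+)$; (ii) $\int_\sigma t^mP(x,\mathrm{d}t)=\frac{\int_\sigma t^{m+n}P(\phi^n(x),\mathrm{d}t)}{\int_0^\infty t^nP(\phi^n(x),\mathrm{d}t)}$ for $\mu$-a.e.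 $x$ and every $\sigma\in\mathfrak{B}(\mathbb{R}_+)$; (iii) $\int_\sigma\frac1{t^n}P(x,\mathrm{d}t)=\frac{P(\phi^n(x),\sigma)}{\prod_{j=1}^n\mathsf{h}_\phi(\phi^j(x))}$ for $\mu$-a.e. $x$ and every $\sigma\in\mathfrak{B}(\mathbb{R}_+)$; (iv) $\int_0^\infty t^nP(\phi^n(x),\mathrm{d}t)=\prod_{j=1}^n\mathsf{h}_\phi(\phi^j(x))$ for $\mu$-a.e. $x$; (v) $\int_0^\infty\frac1{t^n}P(x,\mathrm{d}t)=\frac1{\prod_{j=1}^n\mathsf{h}_\phi(\phi^j(x))}$ for $\mu$-a.e. $x$. Moreover, if $\mathsf{h}_\phi>0$ a.e. $[\mu]$, then $\mathsf{E}(\mathsf{h}_{\phi^n})=\mathsf{h}_{\phi^n}$ a.e. $[\mu]$ for every $n\in\mathbb{Z}_+$.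
   Context: $\mathbb{R}_+=[0,\infty)$, $\mathbb{N}=\{1,2,\dots\}$, $\mathbb{Z}_+=\{0,1,\dots\}$. Conventions: $0\cdot\infty=\infty\cdot0=0$, $1/0=\infty$, $0/0=1$. Nonsingular: $\phi^{-1}(\Delta)\in\mathscr{A}$ for $\Delta\in\mathscr{A}$ and $\mu(\phi^{-1}(\Delta))=0$ when $\mu(\Delta)=0$. $\phi^n$ is the $n$-fold composition; $\mathsf{h}_{\phi^n}$ is the Radon–Nikodym derivative of $\mu\circ(\phi^n)^{-1}$ w.r.t. $\mu$. $\mathsf{E}(f)$ is the conditional expectation of an $\mathscr{A}$-measurable $f\ge0$ w.r.t. $\phi^{-1}(\mathscr{A})$: the a.e. unique $\phi^{-1}(\mathscr{A})$-measurable function with $\int(g\circ\phi)f\,\mathrm{d}\mu=\int(g\circ\phi)\mathsf{E}(f)\,\mathrm{d}\mu$ for all $\mathscr{A}$-measurable $g\ge0$. $\mathscr{A}$-measurable family of probability measures: each $P(x,\cdot)$ a Borel probability measure on $\mathbb{R}_+$, each $P(\cdot,\sigma)$ $\mathscr{A}$-measurable. *)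

theory Defs
  imports "HOL-Probability.Probability"
begin

definition borel_pos :: "real measure" where
  "borel_pos = restrict_space borel {0..}"

definition nonsingular :: "'a measure \<Rightarrow> ('a \<Rightarrow> 'a) \<Rightarrow> bool" where
  "nonsingular M \<phi> \<longleftrightarrow> \<phi> \<in> measurable M M \<and>
     (\<forall>A\<in>sets M. emeasure M A = 0 \<longrightarrow> emeasure M (\<phi> -` A \<inter> space M) = 0)"

definition hphi :: "'a measure \<Rightarrow> ('a \<Rightarrow> 'a) \<Rightarrow> 'a \<Rightarrow> ennreal" where
  "hphi M \<phi> = RN_deriv M (distr M M \<phi>)"

text \<open>Division on [0,\<infinity>] with the paper's conventions 1/0 = \<infinity>, 0/0 = 1.\<close>
definition ediv :: "ennreal \<Rightarrow> ennreal \<Rightarrow> ennreal" where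
  "ediv a b = (if a = 0 \<and> b = 0 then 1 else a / b)"

text \<open>Integer power t^m of t \<ge> 0 in [0,\<infinity>] (with 1/0 = \<infinity>).\<close>
definition tpow :: "real \<Rightarrow> int \<Rightarrow> ennreal" where
  "tpow t m = (if 0 \<le> m then ennreal t ^ nat m else inverse (ennreal t ^ nat (- m)))"

text \<open>g is a version of the conditional expectation E(f) of f w.r.t. phi^{-1}(A).\<close>
definition is_cond_exp :: "'a measure \<Rightarrow> ('a \<Rightarrow> 'a) \<Rightarrow> ('a \<Rightarrow> ennreal) \<Rightarrow> ('a \<Rightarrow> ennreal) \<Rightarrow> bool" where
  "is_cond_exp M \<phi> f g \<longleftrightarrow> g \<in> borel_measurable (vimage_algebra (space M) \<phi> M) \<and>
     (\<forall>u\<in>borel_measurable M. (\<integral>\<^sup>+x. u (\<phi> x) * f x \<partial>M) = (\<integral>\<^sup>+x. u (\<phi> x) * g x \<partial>M))"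

end

theory Submission
  imports Defs
begin

(* Testing the consistency condition on the countable, intersection-stable generator
   {[0,r] : r rational} of the Borel sets of [0,\<infinity>) shows that, for a.e. x, P x has density
   t / h(\<phi> x) with respect to P (\<phi> x), where 0 < h(\<phi> x) < \<infinity> a.e. because \<phi> is nonsingular.
   Iterating along the orbit gives P x = t^n / (h(\<phi> x) \<cdots> h(\<phi>^n x)) \<cdot> P (\<phi>^n x); all the
   integral identities follow from this, and P x {0} = 0 because the density vanishes at 0.
   For the last claim, the change of variables \<integral> u \<circ> \<phi> d\<mu> = \<integral> h u d\<mu> and induction identify
   h_{\<phi>^n} with the n-th moment x \<mapsto> \<integral> t^n P(x,dt), which by the first identity equals
   (\<integral> t^(n+1) P(\<phi> x,dt)) / h(\<phi> x) a.e. and is therefore \<phi>\<inverse>(\<A>)-measurable. Hence it is its own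
   conditional expectation, and conditional expectations are unique a.e. because h < \<infinity> makes
   \<mu> restricted to \<phi>\<inverse>(\<A>) \<sigma>-finite. *)

lemma AE_nonsingular_comp:
  assumes ns: "nonsingular M \<phi>" and ae: "AE x in M. Q x"
  shows "AE x in M. Q (\<phi> x)"
proof -
  obtain N where N: "N \<in> null_sets M" "{x\<in>space M. \<not> Q x} \<subseteq> N"
    using ae by (auto simp: eventually_ae_filter)
  have \<phi>: "\<phi> \<in> measurable M M"
    using ns by (simp add: nonsingular_def)
  have "\<phi> -` N \<inter> space M \<in> null_sets M"
    using ns N(1) \<phi> by (auto simp: nonsingular_def null_sets_def)
  moreover have "{x\<in>space M. \<not> Q (\<phi> x)} \<subseteq> \<phi> -` N \<inter> space M"
    using N(2) measurable_space[OF \<phi>] by auto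
  ultimately show ?thesis
    by (rule AE_I')
qed

lemma AE_nonsingular_funpow:
  assumes "nonsingular M \<phi>" and "AE x in M. Q x"
  shows "AE x in M. Q ((\<phi> ^^ n) x)"
  using assms(2)
proof (induction n arbitrary: Q)
  case 0
  then show ?case by simp
next
  case (Suc n)
  from Suc.IH[OF AE_nonsingular_comp[OF assms(1) Suc.prems]] show ?case
    by simp
qed

lemma borel_measurable_hphi [measurable]: "hphi M \<phi> \<in> borel_measurable M"
  unfolding hphi_def by simp

lemma density_hphi:
  assumes sf: "sigma_finite_measure M" and ns: "nonsingular M \<phi>"
  shows "density M (hphi M \<phi>) = distr M M \<phi>"
proof -
  have "absolutely_continuous M (distr M M \<phi>)"
    using ns by (auto simp: absolutely_continuous_def nonsingular_def null_sets_def emeasure_distr)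
  then show ?thesis
    unfolding hphi_def by (simp add: sigma_finite_measure.density_RN_deriv[OF sf])
qed

lemma nn_integral_comp_hphi:
  assumes sf: "sigma_finite_measure M" and ns: "nonsingular M \<phi>"
    and u: "u \<in> borel_measurable M"
  shows "(\<integral>\<^sup>+x. u (\<phi> x) \<partial>M) = (\<integral>\<^sup>+x. hphi M \<phi> x * u x \<partial>M)"
proof -
  have [measurable]: "\<phi> \<in> measurable M M"
    using ns by (simp add: nonsingular_def)
  have "(\<integral>\<^sup>+x. u (\<phi> x) \<partial>M) = (\<integral>\<^sup>+x. u x \<partial>distr M M \<phi>)"
    using u by (simp add: nn_integral_distr)
  also have "\<dots> = (\<integral>\<^sup>+x. hphi M \<phi> x * u x \<partial>M)"
    using u by (simp add: density_hphi[OF sf ns, symmetric] nn_integral_density)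
  finally show ?thesis .
qed

lemma AE_hphi_comp_nonzero:
  assumes sf: "sigma_finite_measure M" and ns: "nonsingular M \<phi>"
  shows "AE x in M. hphi M \<phi> (\<phi> x) \<noteq> 0"
proof -
  let ?Z = "{y\<in>space M. hphi M \<phi> y = 0}"
  have \<phi> [measurable]: "\<phi> \<in> measurable M M"
    using ns by (simp add: nonsingular_def)
  have "?Z \<in> null_sets (density M (hphi M \<phi>))"
    by (subst null_sets_density_iff) auto
  then have "\<phi> -` ?Z \<inter> space M \<in> null_sets M"
    by (simp add: density_hphi[OF sf ns] null_sets_distr_iff)
  moreover have "{x\<in>space M. \<not> hphi M \<phi> (\<phi> x) \<noteq> 0} \<subseteq> \<phi> -` ?Z \<inter> space M"
    using measurable_space[OF \<phi>] by auto
  ultimately show ?thesis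
    by (rule AE_I')
qed

lemma sigma_finite_subalgebra_vimage_nonsingular:
  assumes sf: "sigma_finite_measure M" and ns: "nonsingular M \<phi>"
    and fin: "AE x in M. hphi M \<phi> x \<noteq> \<infinity>"
  shows "sigma_finite_subalgebra M (vimage_algebra (space M) \<phi> M)"
    (is "sigma_finite_subalgebra M ?V")
proof (rule sigma_finite_subalgebra.intro)
  have \<phi> [measurable]: "\<phi> \<in> measurable M M"
    using ns by (simp add: nonsingular_def)
  have \<phi>_space: "\<phi> \<in> space M \<rightarrow> space M"
    using measurable_space[OF \<phi>] by auto
  show sub: "subalgebra M ?V"
    unfolding subalgebra_def sets_vimage_algebra2[OF \<phi>_space] using measurable_sets[OF \<phi>] by auto
  have "sigma_finite_measure (distr M M \<phi>)"
    using sigma_finite_measure.sigma_finite_iff_density_finite[OF sf, of "hphi M \<phi>"] fin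
    by (simp add: density_hphi[OF sf ns])
  from sigma_finite_measure.sigma_finite_countable[OF this]
  obtain A where A: "countable A" "A \<subseteq> sets M" "\<Union>A = space M"
      "\<And>a. a \<in> A \<Longrightarrow> emeasure (distr M M \<phi>) a \<noteq> \<infinity>"
    unfolding sets_distr space_distr by blast
  show "sigma_finite_measure (restr_to_subalg M ?V)"
  proof (rule sigma_finite_measure.intro, intro exI conjI ballI)
    let ?F = "(\<lambda>a. \<phi> -` a \<inter> space M) ` A"
    show "countable ?F"
      using A(1) by simp
    show F: "?F \<subseteq> sets (restr_to_subalg M ?V)"
      unfolding sets_restr_to_subalg[OF sub] using A(2) by (auto intro!: in_vimage_algebra)
    show "\<Union>?F = space (restr_to_subalg M ?V)"
    proof
      show "\<Union>?F \<subseteq> space (restr_to_subalg M ?V)"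
        by (auto simp: space_restr_to_subalg)
      show "space (restr_to_subalg M ?V) \<subseteq> \<Union>?F"
      proof
        fix x assume "x \<in> space (restr_to_subalg M ?V)"
        then have "\<phi> x \<in> \<Union>A"
          using A(3) \<phi>_space by (auto simp: space_restr_to_subalg)
        then show "x \<in> \<Union>?F"
          using \<open>x \<in> space (restr_to_subalg M ?V)\<close> by (auto simp: space_restr_to_subalg)
      qed
    qed
    fix b assume b: "b \<in> ?F"
    then obtain a where a: "a \<in> A" "b = \<phi> -` a \<inter> space M"
      by blast
    have "emeasure (restr_to_subalg M ?V) b = emeasure (distr M M \<phi>) a"
      using a A(2) F b by (auto simp: emeasure_restr_to_subalg[OF sub] emeasure_distr sets_restr_to_subalg[OF sub])
    with A(4)[OF a(1)] show "emeasure (restr_to_subalg M ?V) b \<noteq> \<infinity>"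
      by metis
  qed
qed

lemma AE_is_cond_exp_eq_nn_cond_exp:
  assumes "sigma_finite_subalgebra M (vimage_algebra (space M) \<phi> M)"
    and \<phi>: "\<phi> \<in> space M \<rightarrow> space M" and f: "f \<in> borel_measurable M"
    and g: "is_cond_exp M \<phi> f g"
  shows "AE x in M. g x = nn_cond_exp M (vimage_algebra (space M) \<phi> M) f x"
proof -
  interpret sigma_finite_subalgebra M "vimage_algebra (space M) \<phi> M" by fact
  show ?thesis
  proof (rule nn_cond_exp_charact)
    fix A assume "A \<in> sets (vimage_algebra (space M) \<phi> M)"
    then obtain B where B: "B \<in> sets M" "A = \<phi> -` B \<inter> space M"
      using sets_vimage_algebra2[OF \<phi>] by auto
    have "(\<integral>\<^sup>+x\<in>A. f x \<partial>M) = (\<integral>\<^sup>+x. indicator B (\<phi> x) * f x \<partial>M)"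
      by (rule nn_integral_cong) (auto simp: B(2) indicator_def)
    also have "\<dots> = (\<integral>\<^sup>+x. indicator B (\<phi> x) * g x \<partial>M)"
      using g B(1) by (simp add: is_cond_exp_def)
    also have "\<dots> = (\<integral>\<^sup>+x\<in>A. g x \<partial>M)"
      by (rule nn_integral_cong) (auto simp: B(2) indicator_def)
    finally show "(\<integral>\<^sup>+x\<in>A. f x \<partial>M) = (\<integral>\<^sup>+x\<in>A. g x \<partial>M)" .
  qed (use f g in \<open>auto simp: is_cond_exp_def\<close>)
qed

lemma borel_eq_sigma_atMost_rat: "borel = sigma UNIV ((\<lambda>r::real. {..r}) ` \<rat>)"
proof (rule borel_eq_sigmaI1[OF borel_eq_atMost])
  fix X :: "real set" assume "X \<in> range (\<lambda>a. {..a})"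
  then obtain a where X: "X = {..a}"
    by auto
  have "\<forall>n::nat. \<exists>q\<in>\<rat>. a < q \<and> q < a + 1 / real (Suc n)"
    by (auto intro!: Rats_dense_in_real)
  then obtain q where q: "\<And>n. q n \<in> \<rat>" "\<And>n. a < q n" "\<And>n. q n < a + 1 / real (Suc n)"
    by metis
  have "X = (\<Inter>n. {..q n})"
  proof safe
    fix x n assume "x \<in> X"
    then show "x \<le> q n"
      using q(2)[of n] X by auto
  next
    fix x assume x: "x \<in> (\<Inter>n. {..q n})"
    show "x \<in> X"
    proof (rule ccontr)
      assume "x \<notin> X"
      then obtain n where "1 / real (Suc n) < x - a"
        using X reals_Archimedean[of "x - a"] by (auto simp: field_simps)
      moreover have "x \<le> q n"
        using x by auto
      ultimately show False
        using q(3)[of n] by linarith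
    qed
  qed
  moreover have "(\<Inter>n. {..q n}) \<in> sets (sigma UNIV ((\<lambda>r::real. {..r}) ` \<rat>))"
    using q(1) by (intro sets.countable_INT') auto
  ultimately show "X \<in> sets (sigma UNIV ((\<lambda>r::real. {..r}) ` \<rat>))"
    by simp
qed auto

lemma sets_borel_pos_eq_sigma_Icc_rat: "sets borel_pos = sigma_sets {0..} ((\<lambda>r::real. {0..r}) ` \<rat>)"
proof -
  have borel: "sets borel = sigma_sets UNIV ((\<lambda>r::real. {..r}) ` \<rat>)"
    by (subst borel_eq_sigma_atMost_rat) simp
  have "{0::real..} \<in> sigma_sets UNIV ((\<lambda>r::real. {..r}) ` \<rat>)"
    using borel by (metis atLeast_borel)
  then have "sets borel_pos = sigma_sets {0..} ((\<inter>) {0..} ` (\<lambda>r::real. {..r}) ` \<rat>)"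
    unfolding borel_pos_def sets_restrict_space borel by (subst sigma_sets_Int) auto
  also have "(\<inter>) {0..} ` (\<lambda>r::real. {..r}) ` \<rat> = (\<lambda>r. {0..r}) ` \<rat>"
    by (auto simp: image_image atLeastAtMost_def)
  finally show ?thesis .
qed

lemma atLeastAtMost_in_borel_pos: "{0..r} \<in> sets borel_pos"
  unfolding borel_pos_def sets_restrict_space by (rule image_eqI[of _ _ "{0..r}"]) auto

lemma borel_measurable_borel_pos: "f \<in> borel_measurable borel \<Longrightarrow> f \<in> borel_measurable borel_pos"
  unfolding borel_pos_def by (rule measurable_restrict_space1)

lemma measure_eq_on_borel_pos:
  assumes sets: "sets N = sets borel_pos" "sets N' = sets borel_pos" and fin: "finite_measure N"
    and eq: "\<And>r. r \<in> \<rat> \<Longrightarrow> emeasure N {0..r} = emeasure N' {0..r}"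
  shows "N = N'"
proof (rule measure_eqI_generator_eq_countable
    [where E="(\<lambda>r. {0..r}) ` \<rat>" and A="(\<lambda>r. {0..r}) ` \<rat>" and \<Omega>="{0..}"])
  show "Int_stable ((\<lambda>r::real. {0..r}) ` \<rat>)"
  proof (rule Int_stableI)
    fix a b assume "a \<in> (\<lambda>r::real. {0..r}) ` \<rat>" "b \<in> (\<lambda>r::real. {0..r}) ` \<rat>"
    then obtain r s where "r \<in> \<rat>" "s \<in> \<rat>" "a = {0..r}" "b = {0..s}"
      by auto
    then show "a \<inter> b \<in> (\<lambda>r. {0..r}) ` \<rat>"
      by (intro image_eqI[of _ _ "min r s"]) (auto simp: min_def)
  qed
  show "\<Union>((\<lambda>r::real. {0..r}) ` \<rat>) = {0..}"
  proof (intro equalityI subsetI)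
    fix x :: real assume "x \<in> {0..}"
    moreover obtain n :: nat where "x \<le> real n"
      using real_arch_simple by blast
    ultimately show "x \<in> \<Union>((\<lambda>r. {0..r}) ` \<rat>)"
      by (intro UN_I[of "real n"]) auto
  qed auto
  show "emeasure N A \<noteq> \<infinity>" for A
    using fin by (simp add: finite_measure.emeasure_finite)
  show "(\<lambda>r::real. {0..r}) ` \<rat> \<subseteq> Pow {0..}"
    by auto
  show "emeasure N X = emeasure N' X" if "X \<in> (\<lambda>r. {0..r}) ` \<rat>" for X
    using that eq by auto
  show "sets N = sigma_sets {0..} ((\<lambda>r. {0..r}) ` \<rat>)" "sets N' = sigma_sets {0..} ((\<lambda>r. {0..r}) ` \<rat>)"
    using sets by (simp_all add: sets_borel_pos_eq_sigma_Icc_rat)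
qed (simp_all add: countable_rat)

lemma tpow_powr:
  assumes t: "0 < t"
  shows "tpow t m = ennreal (t powr real_of_int m)"
proof (cases "0 \<le> m")
  case True
  then have eq: "real_of_int m = real (nat m)"
    by simp
  have "tpow t m = ennreal (t ^ nat m)"
    using True t by (simp add: tpow_def ennreal_power)
  also have "t ^ nat m = t powr real_of_int m"
    unfolding eq by (rule powr_realpow[OF t, symmetric])
  finally show ?thesis .
next
  case False
  then have eq: "real_of_int m = - real (nat (-m))"
    by simp
  have "tpow t m = inverse (ennreal (t ^ nat (-m)))"
    using False t by (simp add: tpow_def ennreal_power)
  also have "\<dots> = ennreal (inverse (t ^ nat (-m)))"
    using t by (simp add: inverse_ennreal)
  also have "inverse (t ^ nat (-m)) = t powr real_of_int m"
    unfolding eq powr_minus using powr_realpow[OF t] by simp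
  finally show ?thesis .
qed

lemma tpow_mult_power:
  assumes t: "0 < t"
  shows "tpow t m * ennreal t ^ n = tpow t (m + int n)"
proof -
  have "tpow t m * ennreal t ^ n = ennreal (t powr real_of_int m * t powr real n)"
    using t by (simp add: tpow_powr ennreal_power powr_realpow ennreal_mult)
  also have "t powr real_of_int m * t powr real n = t powr real_of_int (m + int n)"
    by (simp add: powr_add)
  finally show ?thesis
    using t by (simp add: tpow_powr)
qed

lemma borel_measurable_tpow [measurable]: "(\<lambda>t. tpow t m) \<in> borel_measurable borel"
  unfolding tpow_def by (cases "0 \<le> m") simp_all

lemma inverse_power_mult_power_ennreal:
  assumes "0 < t"
  shows "inverse (ennreal t ^ n) * ennreal t ^ n = 1"
proof -
  have "ennreal t ^ n \<noteq> 0" "ennreal t ^ n < \<top>"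
    using assms by (simp_all add: ennreal_power less_top[symmetric])
  then show ?thesis
    using ennreal_divide_self[of "ennreal t ^ n"] by (simp add: divide_ennreal_def mult.commute)
qed

lemma prod_inverse_ennreal:
  fixes f :: "'i \<Rightarrow> ennreal"
  assumes "\<And>i. i \<in> A \<Longrightarrow> f i < \<top>"
  shows "(\<Prod>i\<in>A. inverse (f i)) = inverse (\<Prod>i\<in>A. f i)"
  using assms
proof (induction A rule: infinite_finite_induct)
  case (insert a A)
  then have "(\<Prod>i\<in>A. f i) < \<top>"
    by (auto simp: ennreal_prod_eq_top less_top[symmetric])
  with insert show ?case
    by (simp add: ennreal_inverse_mult)
qed simp_all

lemma ediv_eq_divide: "b \<noteq> 0 \<Longrightarrow> ediv a b = a / b"
  by (simp add: ediv_def)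

locale strongly_consistent =
  fixes M :: "'a measure" and \<phi> :: "'a \<Rightarrow> 'a" and P :: "'a \<Rightarrow> real measure"
  assumes sigma_finite: "sigma_finite_measure M"
    and nonsingular: "nonsingular M \<phi>"
    and hphi_finite: "AE x in M. hphi M \<phi> x < \<infinity>"
    and prob_space_P: "\<And>x. x \<in> space M \<Longrightarrow> prob_space (P x) \<and> sets (P x) = sets borel_pos"
    and measurable_P: "\<And>\<sigma>. \<sigma> \<in> sets borel_pos \<Longrightarrow> (\<lambda>x. emeasure (P x) \<sigma>) \<in> borel_measurable M"
    and consistent: "\<And>\<sigma>. \<sigma> \<in> sets borel_pos \<Longrightarrow>
       AE x in M. emeasure (P x) \<sigma> = ediv (\<integral>\<^sup>+t\<in>\<sigma>. ennreal t \<partial>P (\<phi> x)) (hphi M \<phi> (\<phi> x))"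
begin

abbreviation h :: "'a \<Rightarrow> ennreal" where
  "h \<equiv> hphi M \<phi>"

definition hprod :: "nat \<Rightarrow> 'a \<Rightarrow> ennreal" where
  "hprod n x = (\<Prod>j\<in>{1..n}. h ((\<phi> ^^ j) x))"

definition moment :: "nat \<Rightarrow> 'a \<Rightarrow> ennreal" where
  "moment n x = (\<integral>\<^sup>+t. ennreal t ^ n \<partial>P x)"

lemma measurable_\<phi> [measurable]: "\<phi> \<in> measurable M M"
  using nonsingular by (simp add: nonsingular_def)

lemma funcset_\<phi>: "\<phi> \<in> space M \<rightarrow> space M"
  using measurable_space[OF measurable_\<phi>] by auto

lemma funpow_in_space: "x \<in> space M \<Longrightarrow> (\<phi> ^^ n) x \<in> space M"
  using measurable_space[OF measurable_compose_n[OF measurable_\<phi>]] by blast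

lemma AE_funpow: "AE x in M. Q x \<Longrightarrow> AE x in M. Q ((\<phi> ^^ n) x)"
  using AE_nonsingular_funpow[OF nonsingular] .

lemma space_P: "x \<in> space M \<Longrightarrow> space (P x) = {0..}"
  using prob_space_P[of x] sets_eq_imp_space_eq[of "P x" borel_pos]
  by (simp add: borel_pos_def space_restrict_space)

lemma emeasure_P_space: "x \<in> space M \<Longrightarrow> emeasure (P x) (space (P x)) = 1"
  using prob_space_P[of x] by (simp add: prob_space.emeasure_space_1)

lemma measurable_P_borel_pos:
  "f \<in> borel_measurable borel_pos \<Longrightarrow> x \<in> space M \<Longrightarrow> f \<in> borel_measurable (P x)"
  using prob_space_P measurable_cong_sets by blast

lemma measurable_P_borel:
  "f \<in> borel_measurable borel \<Longrightarrow> x \<in> space M \<Longrightarrow> f \<in> borel_measurable (P x)"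
  using measurable_P_borel_pos borel_measurable_borel_pos by blast

lemma measurable_nn_integral_P:
  assumes "f \<in> borel_measurable borel_pos"
  shows "(\<lambda>x. \<integral>\<^sup>+t. f t \<partial>P x) \<in> borel_measurable M"
proof -
  have "P \<in> measurable M (subprob_algebra borel_pos)"
    by (rule measurable_subprob_algebra) (auto simp: prob_space_P measurable_P prob_space_imp_subprob_space)
  from measurable_comp[OF this nn_integral_measurable_subprob_algebra[OF assms]] show ?thesis
    by (simp add: comp_def)
qed

lemma P_eq_density_comp:
  "AE x in M. P x = density (P (\<phi> x)) (\<lambda>t. ennreal t * inverse (h (\<phi> x)))"
proof -
  have "AE x in M. \<forall>r\<in>\<rat>. emeasure (P x) {0..r} = ediv (\<integral>\<^sup>+t\<in>{0..r}. ennreal t \<partial>P (\<phi> x)) (h (\<phi> x))"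
    using countable_rat consistent[OF atLeastAtMost_in_borel_pos] by (subst AE_ball_countable) blast+
  then show ?thesis
    using AE_hphi_comp_nonzero[OF sigma_finite nonsingular] AE_space
  proof eventually_elim
    case (elim x)
    let ?y = "\<phi> x"
    have y: "?y \<in> space M"
      using elim(3) funcset_\<phi> by blast
    have [measurable]: "(\<lambda>t. ennreal t) \<in> borel_measurable (P ?y)"
      using y by (intro measurable_P_borel) auto
    show ?case
    proof (rule measure_eq_on_borel_pos)
      show "sets (P x) = sets borel_pos" "sets (density (P ?y) (\<lambda>t. ennreal t * inverse (h ?y))) = sets borel_pos"
        using prob_space_P[OF elim(3)] prob_space_P[OF y] by simp_all
      show "finite_measure (P x)"
        using prob_space_P[OF elim(3)] by (simp add: prob_space_def)
      fix r :: real assume "r \<in> \<rat>"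
      have [measurable]: "{0..r} \<in> sets (P ?y)"
        using prob_space_P[OF y] atLeastAtMost_in_borel_pos by simp
      have "emeasure (density (P ?y) (\<lambda>t. ennreal t * inverse (h ?y))) {0..r}
          = (\<integral>\<^sup>+t. ennreal t * indicator {0..r} t * inverse (h ?y) \<partial>P ?y)"
        by (simp add: emeasure_density ac_simps)
      also have "\<dots> = (\<integral>\<^sup>+t. ennreal t * indicator {0..r} t \<partial>P ?y) * inverse (h ?y)"
        by (rule nn_integral_multc) measurable
      also have "\<dots> = emeasure (P x) {0..r}"
        using elim(1) \<open>r \<in> \<rat>\<close> elim(2) by (simp add: ediv_eq_divide divide_ennreal_def)
      finally show "emeasure (P x) {0..r} = emeasure (density (P ?y) (\<lambda>t. ennreal t * inverse (h ?y))) {0..r}"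
        by simp
    qed
  qed
qed

lemma P_eq_density_funpow:
  "AE x in M. P x = density (P ((\<phi> ^^ n) x)) (\<lambda>t. ennreal t ^ n * (\<Prod>j\<in>{1..n}. inverse (h ((\<phi> ^^ j) x))))"
proof (induction n)
  case 0
  show ?case
    by (simp add: density_1)
next
  case (Suc n)
  from AE_funpow[OF P_eq_density_comp, of n] Suc AE_space show ?case
  proof eventually_elim
    case (elim x)
    let ?y = "(\<phi> ^^ Suc n) x"
    have [measurable]: "(\<lambda>t. ennreal t) \<in> borel_measurable (P ?y)"
      using funpow_in_space[OF elim(3), of "Suc n"] by (intro measurable_P_borel) auto
    have "P x = density (density (P ?y) (\<lambda>t. ennreal t * inverse (h ?y)))
        (\<lambda>t. ennreal t ^ n * (\<Prod>j\<in>{1..n}. inverse (h ((\<phi> ^^ j) x))))"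
      using elim(1,2) by simp
    also have "\<dots> = density (P ?y)
        (\<lambda>t. ennreal t * inverse (h ?y) * (ennreal t ^ n * (\<Prod>j\<in>{1..n}. inverse (h ((\<phi> ^^ j) x)))))"
      by (rule density_density_eq) measurable
    also have "(\<lambda>t. ennreal t * inverse (h ?y) * (ennreal t ^ n * (\<Prod>j\<in>{1..n}. inverse (h ((\<phi> ^^ j) x)))))
        = (\<lambda>t. ennreal t ^ Suc n * (\<Prod>j\<in>{1..Suc n}. inverse (h ((\<phi> ^^ j) x))))"
      by (simp add: atLeastAtMostSuc_conv ac_simps)
    finally show ?case .
  qed
qed

lemma AE_hprod_nonzero_finite: "AE x in M. hprod n x \<noteq> 0 \<and> hprod n x < \<infinity>"
proof -
  have "AE x in M. \<forall>j\<in>{1..n}. h ((\<phi> ^^ j) x) \<noteq> 0 \<and> h ((\<phi> ^^ j) x) < \<infinity>"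
  proof (subst AE_ball_countable, simp, intro ballI)
    fix j :: nat assume "j \<in> {1..n}"
    then obtain k where j: "j = Suc k"
      by (cases j) auto
    have "AE x in M. h (\<phi> x) \<noteq> 0 \<and> h (\<phi> x) < \<infinity>"
      using AE_hphi_comp_nonzero[OF sigma_finite nonsingular] AE_nonsingular_comp[OF nonsingular hphi_finite]
      by eventually_elim simp
    from AE_funpow[OF this, of k]
    show "AE x in M. h ((\<phi> ^^ j) x) \<noteq> 0 \<and> h ((\<phi> ^^ j) x) < \<infinity>"
      by (simp add: j)
  qed
  then show ?thesis
    by eventually_elim (auto simp: hprod_def ennreal_prod_eq_top less_top[symmetric])
qed

lemma nn_integral_P_funpow:
  "AE x in M. \<forall>f\<in>borel_measurable borel_pos.
     (\<integral>\<^sup>+t. f t \<partial>P x) = (\<integral>\<^sup>+t. f t * ennreal t ^ n \<partial>P ((\<phi> ^^ n) x)) / hprod n x"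
  using P_eq_density_funpow[of n] AE_hprod_nonzero_finite[of n] AE_space
proof eventually_elim
  case (elim x)
  let ?y = "(\<phi> ^^ n) x"
  have "(\<Prod>j\<in>{1..n}. inverse (h ((\<phi> ^^ j) x))) = inverse (hprod n x)"
    unfolding hprod_def
  proof (rule prod_inverse_ennreal)
    fix j assume j: "j \<in> {1..n}"
    show "h ((\<phi> ^^ j) x) < \<top>"
      using elim(2) j by (auto simp: hprod_def ennreal_prod_eq_top less_top[symmetric])
  qed
  then have Px: "P x = density (P ?y) (\<lambda>t. ennreal t ^ n * inverse (hprod n x))"
    using elim(1) by simp
  have [measurable]: "(\<lambda>t. ennreal t) \<in> borel_measurable (P ?y)"
    using elim(3) funpow_in_space by (intro measurable_P_borel) auto
  show ?case
  proof
    fix f :: "real \<Rightarrow> ennreal" assume "f \<in> borel_measurable borel_pos"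
    then have [measurable]: "f \<in> borel_measurable (P ?y)"
      using elim(3) funpow_in_space measurable_P_borel_pos by blast
    have "(\<integral>\<^sup>+t. f t \<partial>P x) = (\<integral>\<^sup>+t. f t * ennreal t ^ n * inverse (hprod n x) \<partial>P ?y)"
      unfolding Px by (subst nn_integral_density) (auto simp: ac_simps)
    also have "\<dots> = (\<integral>\<^sup>+t. f t * ennreal t ^ n \<partial>P ?y) * inverse (hprod n x)"
      by (rule nn_integral_multc) measurable
    finally show "(\<integral>\<^sup>+t. f t \<partial>P x) = (\<integral>\<^sup>+t. f t * ennreal t ^ n \<partial>P ?y) / hprod n x"
      by (simp add: divide_ennreal_def)
  qed
qed

lemma AE_P_zero: "AE x in M. emeasure (P x) {0} = 0"
  using nn_integral_P_funpow[of 1] AE_space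
proof eventually_elim
  case (elim x)
  have zero: "{0::real} \<in> sets borel_pos"
    using atLeastAtMost_in_borel_pos[of 0] by simp
  then have "(\<integral>\<^sup>+t. indicator {0} t \<partial>P x) = (\<integral>\<^sup>+t. indicator {0} t * ennreal t \<partial>P (\<phi> x)) / hprod 1 x"
    using elim(1) by simp
  also have "(\<integral>\<^sup>+t. indicator {0} t * ennreal t \<partial>P (\<phi> x)) = (\<integral>\<^sup>+t. 0 \<partial>P (\<phi> x))"
    by (rule nn_integral_cong) (simp add: indicator_def)
  finally show ?case
    using zero prob_space_P[OF elim(2)] by simp
qed

lemma AE_P_funpow_pos: "AE x in M. AE t in P ((\<phi> ^^ n) x). 0 < t"
  using AE_funpow[OF AE_P_zero, of n] AE_space
proof eventually_elim
  case (elim x)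
  let ?y = "(\<phi> ^^ n) x"
  have "{0} \<in> null_sets (P ?y)"
    using elim prob_space_P[OF funpow_in_space[OF elim(2)]] atLeastAtMost_in_borel_pos[of 0]
    by (simp add: null_sets_def)
  moreover have "{t \<in> space (P ?y). \<not> 0 < t} \<subseteq> {0}"
    using space_P[OF funpow_in_space[OF elim(2)]] by auto
  ultimately show ?case
    by (rule AE_I')
qed

lemma nn_integral_P_transfer:
  assumes f: "f \<in> borel_measurable borel_pos" and fg: "\<And>t. 0 < t \<Longrightarrow> f t * ennreal t ^ n = g t"
  shows "AE x in M. (\<integral>\<^sup>+t. f t \<partial>P x) = ediv (\<integral>\<^sup>+t. g t \<partial>P ((\<phi> ^^ n) x)) (hprod n x)"
  using nn_integral_P_funpow[of n] AE_P_funpow_pos[of n] AE_hprod_nonzero_finite[of n]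
proof eventually_elim
  case (elim x)
  have "(\<integral>\<^sup>+t. f t * ennreal t ^ n \<partial>P ((\<phi> ^^ n) x)) = (\<integral>\<^sup>+t. g t \<partial>P ((\<phi> ^^ n) x))"
    using elim(2) by (rule nn_integral_cong_AE[OF AE_mp]) (simp add: fg)
  then show ?case
    using elim(1,3) f by (simp add: ediv_eq_divide)
qed

lemma nn_integral_P_eq_ediv:
  assumes "f \<in> borel_measurable borel_pos"
  shows "AE x in M. (\<integral>\<^sup>+t. f t \<partial>P x) = ediv (\<integral>\<^sup>+t. f t * ennreal t ^ n \<partial>P ((\<phi> ^^ n) x)) (hprod n x)"
  using assms by (rule nn_integral_P_transfer) simp

lemma nn_integral_power_funpow_eq_hprod:
  "AE x in M. (\<integral>\<^sup>+t. ennreal t ^ n \<partial>P ((\<phi> ^^ n) x)) = hprod n x"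
proof -
  have "AE x in M. (\<integral>\<^sup>+t. 1 \<partial>P x) = ediv (\<integral>\<^sup>+t. ennreal t ^ n \<partial>P ((\<phi> ^^ n) x)) (hprod n x)"
    by (rule nn_integral_P_transfer) simp_all
  with AE_hprod_nonzero_finite[of n] AE_space show ?thesis
  proof eventually_elim
    case (elim x)
    then have "(\<integral>\<^sup>+t. ennreal t ^ n \<partial>P ((\<phi> ^^ n) x)) / hprod n x = 1"
      using emeasure_P_space[of x] by (simp add: ediv_eq_divide)
    then show ?case
      by (simp add: divide_eq_1_ennreal)
  qed
qed

lemma set_nn_integral_tpow_funpow:
  assumes \<sigma>: "\<sigma> \<in> sets borel_pos"
  shows "AE x in M. (\<integral>\<^sup>+t\<in>\<sigma>. tpow t m \<partial>P x) =
    ediv (\<integral>\<^sup>+t\<in>\<sigma>. tpow t (m + int n) \<partial>P ((\<phi> ^^ n) x)) (hprod n x)"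
proof (rule nn_integral_P_transfer)
  have [measurable]: "\<sigma> \<in> sets borel_pos" "(\<lambda>t. tpow t m) \<in> borel_measurable borel_pos"
    using \<sigma> by (simp_all add: borel_measurable_borel_pos)
  show "(\<lambda>t. tpow t m * indicator \<sigma> t) \<in> borel_measurable borel_pos"
    by measurable
  show "tpow t m * indicator \<sigma> t * ennreal t ^ n = tpow t (m + int n) * indicator \<sigma> t" if "0 < t" for t
    using that by (simp add: tpow_mult_power[symmetric] ac_simps)
qed

lemma set_nn_integral_tpow_funpow_moment:
  assumes "\<sigma> \<in> sets borel_pos"
  shows "AE x in M. (\<integral>\<^sup>+t\<in>\<sigma>. tpow t m \<partial>P x) =
    ediv (\<integral>\<^sup>+t\<in>\<sigma>. tpow t (m + int n) \<partial>P ((\<phi> ^^ n) x)) (\<integral>\<^sup>+t. ennreal t ^ n \<partial>P ((\<phi> ^^ n) x))"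
  using set_nn_integral_tpow_funpow[OF assms, of m n] nn_integral_power_funpow_eq_hprod[of n]
  by eventually_elim simp

lemma set_nn_integral_inverse_power:
  assumes \<sigma>: "\<sigma> \<in> sets borel_pos"
  shows "AE x in M. (\<integral>\<^sup>+t\<in>\<sigma>. inverse (ennreal t ^ n) \<partial>P x) = ediv (emeasure (P ((\<phi> ^^ n) x)) \<sigma>) (hprod n x)"
proof -
  have [measurable]: "\<sigma> \<in> sets borel_pos" "(\<lambda>t. inverse (ennreal t ^ n)) \<in> borel_measurable borel_pos"
    using \<sigma> by (simp_all add: borel_measurable_borel_pos)
  have "AE x in M. (\<integral>\<^sup>+t\<in>\<sigma>. inverse (ennreal t ^ n) \<partial>P x) = ediv (\<integral>\<^sup>+t. indicator \<sigma> t \<partial>P ((\<phi> ^^ n) x)) (hprod n x)"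
  proof (rule nn_integral_P_transfer)
    show "inverse (ennreal t ^ n) * indicator \<sigma> t * ennreal t ^ n = indicator \<sigma> t" if "0 < t" for t
      using inverse_power_mult_power_ennreal[OF that, of n] by (simp add: ac_simps)
  qed measurable
  with AE_space show ?thesis
  proof eventually_elim
    case (elim x)
    then show ?case
      using \<sigma> prob_space_P[OF funpow_in_space[OF elim(1)]] by simp
  qed
qed

lemma nn_integral_inverse_power:
  "AE x in M. (\<integral>\<^sup>+t. inverse (ennreal t ^ n) \<partial>P x) = ediv 1 (hprod n x)"
proof -
  have "AE x in M. (\<integral>\<^sup>+t. inverse (ennreal t ^ n) \<partial>P x) = ediv (\<integral>\<^sup>+t. 1 \<partial>P ((\<phi> ^^ n) x)) (hprod n x)"
    by (rule nn_integral_P_transfer) (simp_all add: borel_measurable_borel_pos inverse_power_mult_power_ennreal)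
  with AE_space show ?thesis
    by eventually_elim (simp add: emeasure_P_space funpow_in_space)
qed

lemma measurable_moment [measurable]: "moment n \<in> borel_measurable M"
  unfolding moment_def by (rule measurable_nn_integral_P) (simp add: borel_measurable_borel_pos)

lemma moment_eq_comp: "AE x in M. moment n x = moment (Suc n) (\<phi> x) * inverse (h (\<phi> x))"
  using nn_integral_P_funpow[of 1]
proof eventually_elim
  case (elim x)
  have "(\<lambda>t. ennreal t ^ n) \<in> borel_measurable borel_pos"
    by (simp add: borel_measurable_borel_pos)
  with elim have "moment n x = (\<integral>\<^sup>+t. ennreal t ^ n * ennreal t ^ 1 \<partial>P (\<phi> x)) / h (\<phi> x)"
    by (simp add: moment_def hprod_def)
  also have "(\<lambda>t. ennreal t ^ n * ennreal t ^ 1) = (\<lambda>t. ennreal t ^ Suc n)"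
    by (simp add: mult.commute)
  finally show ?case
    by (simp add: moment_def divide_ennreal_def)
qed

context
  assumes hphi_pos: "AE x in M. 0 < h x"
begin

lemma nn_integral_funpow_eq_moment:
  "u \<in> borel_measurable M \<Longrightarrow> (\<integral>\<^sup>+x. u ((\<phi> ^^ n) x) \<partial>M) = (\<integral>\<^sup>+x. u x * moment n x \<partial>M)"
proof (induction n arbitrary: u)
  case 0
  show ?case
    by (rule nn_integral_cong) (simp add: moment_def emeasure_P_space)
next
  case (Suc n)
  note [measurable] = Suc.prems
  have "(\<integral>\<^sup>+x. u ((\<phi> ^^ Suc n) x) \<partial>M) = (\<integral>\<^sup>+x. u (\<phi> x) * moment n x \<partial>M)"
    using Suc.IH[of "\<lambda>y. u (\<phi> y)"] by simp
  also have "\<dots> = (\<integral>\<^sup>+x. (\<lambda>y. u y * (moment (Suc n) y * inverse (h y))) (\<phi> x) \<partial>M)"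
    by (rule nn_integral_cong_AE) (use moment_eq_comp[of n] in \<open>eventually_elim, simp\<close>)
  also have "\<dots> = (\<integral>\<^sup>+x. h x * (u x * (moment (Suc n) x * inverse (h x))) \<partial>M)"
    by (rule nn_integral_comp_hphi[OF sigma_finite nonsingular]) measurable
  also have "\<dots> = (\<integral>\<^sup>+x. u x * moment (Suc n) x \<partial>M)"
  proof (rule nn_integral_cong_AE)
    show "AE x in M. h x * (u x * (moment (Suc n) x * inverse (h x))) = u x * moment (Suc n) x"
      using hphi_pos hphi_finite
    proof eventually_elim
      case (elim x)
      then have "h x * inverse (h x) = 1"
        using ennreal_divide_self[of "h x"] by (simp add: divide_ennreal_def)
      then show ?case
        by (metis mult.assoc mult.commute mult_1)
    qed
  qed
  finally show ?case .
qed

lemma hphi_funpow_eq_moment: "AE x in M. hphi M (\<phi> ^^ n) x = moment n x"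
proof -
  have "density M (moment n) = distr M M (\<phi> ^^ n)"
  proof (rule measure_eqI)
    fix A assume "A \<in> sets (density M (moment n))"
    then have A [measurable]: "A \<in> sets M"
      by simp
    have "emeasure (distr M M (\<phi> ^^ n)) A = (\<integral>\<^sup>+x. indicator A x \<partial>distr M M (\<phi> ^^ n))"
      by simp
    also have "\<dots> = (\<integral>\<^sup>+x. indicator A ((\<phi> ^^ n) x) \<partial>M)"
      by (rule nn_integral_distr) simp_all
    also have "\<dots> = (\<integral>\<^sup>+x. indicator A x * moment n x \<partial>M)"
      by (rule nn_integral_funpow_eq_moment) simp
    also have "\<dots> = emeasure (density M (moment n)) A"
      by (simp add: emeasure_density ac_simps)
    finally show "emeasure (density M (moment n)) A = emeasure (distr M M (\<phi> ^^ n)) A"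
      by simp
  qed simp
  from sigma_finite_measure.RN_deriv_unique[OF sigma_finite measurable_moment this]
  show ?thesis
    unfolding hphi_def by (auto elim: AE_mp)
qed

lemma is_cond_exp_hphi_funpow:
  "is_cond_exp M \<phi> (hphi M (\<phi> ^^ n)) (\<lambda>x. moment (Suc n) (\<phi> x) * inverse (h (\<phi> x)))"
  unfolding is_cond_exp_def
proof (intro conjI ballI)
  from measurable_comp[OF measurable_vimage_algebra1[OF funcset_\<phi>], of "\<lambda>y. moment (Suc n) y * inverse (h y)"]
  show "(\<lambda>x. moment (Suc n) (\<phi> x) * inverse (h (\<phi> x))) \<in> borel_measurable (vimage_algebra (space M) \<phi> M)"
    by (simp add: comp_def)
  have "AE x in M. hphi M (\<phi> ^^ n) x = moment (Suc n) (\<phi> x) * inverse (h (\<phi> x))"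
    using hphi_funpow_eq_moment[of n] moment_eq_comp[of n] by eventually_elim simp
  then show "(\<integral>\<^sup>+x. u (\<phi> x) * hphi M (\<phi> ^^ n) x \<partial>M) = (\<integral>\<^sup>+x. u (\<phi> x) * (moment (Suc n) (\<phi> x) * inverse (h (\<phi> x))) \<partial>M)"
    for u
    by (rule nn_integral_cong_AE[OF AE_mp]) simp
qed

lemma AE_is_cond_exp_hphi_funpow:
  assumes g: "is_cond_exp M \<phi> (hphi M (\<phi> ^^ n)) g"
  shows "AE x in M. g x = hphi M (\<phi> ^^ n) x"
proof -
  have sub: "sigma_finite_subalgebra M (vimage_algebra (space M) \<phi> M)"
    using hphi_finite by (intro sigma_finite_subalgebra_vimage_nonsingular[OF sigma_finite nonsingular]) auto
  have hphi_n: "hphi M (\<phi> ^^ n) \<in> borel_measurable M"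
    by simp
  show ?thesis
    using AE_is_cond_exp_eq_nn_cond_exp[OF sub funcset_\<phi> hphi_n g]
      AE_is_cond_exp_eq_nn_cond_exp[OF sub funcset_\<phi> hphi_n is_cond_exp_hphi_funpow]
      hphi_funpow_eq_moment[of n] moment_eq_comp[of n]
    by eventually_elim simp
qed

end

end

theorem proposition24:
  fixes M :: "'a measure" and \<phi> :: "'a \<Rightarrow> 'a" and P :: "'a \<Rightarrow> real measure"
  assumes sf: "sigma_finite_measure M"
    and ns: "nonsingular M \<phi>"
    and hfin: "AE x in M. hphi M \<phi> x < \<infinity>"
    and Pprob: "\<And>x. x \<in> space M \<Longrightarrow> prob_space (P x) \<and> sets (P x) = sets borel_pos"
    and Pmeas: "\<And>\<sigma>. \<sigma> \<in> sets borel_pos \<Longrightarrow> (\<lambda>x. emeasure (P x) \<sigma>) \<in> borel_measurable M"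
    and SCC: "\<And>\<sigma>. \<sigma> \<in> sets borel_pos \<Longrightarrow>
       AE x in M. emeasure (P x) \<sigma> = ediv (\<integral>\<^sup>+t\<in>\<sigma>. ennreal t \<partial>P (\<phi> x)) (hphi M \<phi> (\<phi> x))"
  shows "(AE x in M. emeasure (P x) {0} = 0)
    \<and> (\<forall>f \<in> borel_measurable borel_pos. \<forall>n::nat. n \<ge> 1 \<longrightarrow>
         (AE x in M. (\<integral>\<^sup>+t. f t \<partial>P x) =
            ediv (\<integral>\<^sup>+t. f t * ennreal t ^ n \<partial>P ((\<phi> ^^ n) x)) (\<Prod>j\<in>{1..n}. hphi M \<phi> ((\<phi> ^^ j) x))))
    \<and> (\<forall>n::nat. \<forall>m::int. \<forall>\<sigma> \<in> sets borel_pos. n \<ge> 1 \<longrightarrow>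
         (AE x in M. (\<integral>\<^sup>+t\<in>\<sigma>. tpow t m \<partial>P x) =
            ediv (\<integral>\<^sup>+t\<in>\<sigma>. tpow t (m + int n) \<partial>P ((\<phi> ^^ n) x)) (\<Prod>j\<in>{1..n}. hphi M \<phi> ((\<phi> ^^ j) x))))
    \<and> (\<forall>n::nat. \<forall>m::int. \<forall>\<sigma> \<in> sets borel_pos. n \<ge> 1 \<longrightarrow>
         (AE x in M. (\<integral>\<^sup>+t\<in>\<sigma>. tpow t m \<partial>P x) =
            ediv (\<integral>\<^sup>+t\<in>\<sigma>. tpow t (m + int n) \<partial>P ((\<phi> ^^ n) x)) (\<integral>\<^sup>+t. ennreal t ^ n \<partial>P ((\<phi> ^^ n) x))))
    \<and> (\<forall>n::nat. \<forall>\<sigma> \<in> sets borel_pos. n \<ge> 1 \<longrightarrow>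
         (AE x in M. (\<integral>\<^sup>+t\<in>\<sigma>. inverse (ennreal t ^ n) \<partial>P x) =
            ediv (emeasure (P ((\<phi> ^^ n) x)) \<sigma>) (\<Prod>j\<in>{1..n}. hphi M \<phi> ((\<phi> ^^ j) x))))
    \<and> (\<forall>n::nat. n \<ge> 1 \<longrightarrow>
         (AE x in M. (\<integral>\<^sup>+t. ennreal t ^ n \<partial>P ((\<phi> ^^ n) x)) = (\<Prod>j\<in>{1..n}. hphi M \<phi> ((\<phi> ^^ j) x))))
    \<and> (\<forall>n::nat. n \<ge> 1 \<longrightarrow>
         (AE x in M. (\<integral>\<^sup>+t. inverse (ennreal t ^ n) \<partial>P x) = ediv 1 (\<Prod>j\<in>{1..n}. hphi M \<phi> ((\<phi> ^^ j) x))))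
    \<and> ((AE x in M. 0 < hphi M \<phi> x) \<longrightarrow>
         (\<forall>n::nat. (\<exists>g. is_cond_exp M \<phi> (hphi M (\<phi> ^^ n)) g) \<and>
            (\<forall>g. is_cond_exp M \<phi> (hphi M (\<phi> ^^ n)) g \<longrightarrow> (AE x in M. g x = hphi M (\<phi> ^^ n) x))))"
proof -
  interpret strongly_consistent M \<phi> P
    by (rule strongly_consistent.intro[OF sf ns hfin Pprob Pmeas SCC])
  show ?thesis
    unfolding hprod_def[symmetric]
  proof (intro conjI ballI allI impI)
  qed (rule AE_P_zero nn_integral_P_eq_ediv set_nn_integral_tpow_funpow
      set_nn_integral_tpow_funpow_moment set_nn_integral_inverse_power
      nn_integral_power_funpow_eq_hprod nn_integral_inverse_power
      AE_is_cond_exp_hphi_funpow exI; (rule is_cond_exp_hphi_funpow)?; assumption)+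
qed

end
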